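(* Let $k\ge 3$ and let $\mathcal C_k=S(123,\,(k-1)(k-2)\cdots 21(k+1)k,\,k(k-1)\cdots 21(k+1))$. If $\pi\in\mathcal C_k\cap S_n$ with $n\ge1$ and $\pi_l=n$, then $l\le k$. Moreover, for every $n\ge 0$, $|\mathcal C_k\cap S_n|$ equals the number of nodes at level $n$ of the generating tree defined by the succession rule with axiom $(1)$ and productions $$(1)\rightsquigarrow(2),\qquad (h)\rightsquigarrow(2)(3)\cdots(h)(h+1)\ \ \text{for } 2\le h<k,\qquad (k)\rightsquigarrow(2)(3)\cdots(k-1)(k-1)(k).$$ *)

theory Defs
  imports Main "HOL-Library.Sublist" "HOL-Combinatorics.Multiset_Permutations"
begin

definition Sn :: "nat \<Rightarrow> nat list set" where
  "Sn n = permutations_of_set {1..n}"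

definition order_iso :: "nat list \<Rightarrow> nat list \<Rightarrow> bool" where
  "order_iso xs ys \<longleftrightarrow> length xs = length ys \<and>
     (\<forall>i<length xs. \<forall>j<length xs. (xs ! i < xs ! j) \<longleftrightarrow> (ys ! i < ys ! j))"

definition contains :: "nat list \<Rightarrow> nat list \<Rightarrow> bool" where
  "contains p sigma \<longleftrightarrow> (\<exists>tau. subseq tau p \<and> order_iso tau sigma)"

definition Av :: "nat list set \<Rightarrow> nat list set" where
  "Av P = {p. (\<exists>n. p \<in> Sn n) \<and> (\<forall>sigma\<in>P. \<not> contains p sigma)}"

definition Ck :: "nat \<Rightarrow> nat list set" where
  "Ck k = Av {[1,2,3], rev [1..<k] @ [k+1, k], rev [1..<k+1] @ [k+1]}"

(* Succession rule: (1) ~> (2); (h) ~> (2)(3)...(h+1) for 2 <= h < k;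
   (k) ~> (2)(3)...(k-1)(k-1)(k).  Labels > k never occur. *)
definition children :: "nat \<Rightarrow> nat \<Rightarrow> nat list" where
  "children k h =
     (if h = 1 then [2]
      else if 2 \<le> h \<and> h < k then [2..<h+2]
      else if h = k then [2..<k] @ [k-1, k]
      else [])"

(* Labels of the nodes at level n of the generating tree; the root (axiom (1)) is at level 0. *)
fun level :: "nat \<Rightarrow> nat \<Rightarrow> nat list" where
  "level k 0 = [1]"
| "level k (Suc n) = concat (map (children k) (level k n))"

end

theory Submission
  imports Defs
begin

text \<open>
  Every permutation in \<open>Ck k \<inter> Sn (n + 1)\<close> arises in exactly one way by inserting \<open>n + 1\<close>
  into some \<open>\<pi> \<in> Ck k \<inter> Sn n\<close>. As \<open>n + 1\<close> is the largest entry, inserting it after the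
  first \<open>j\<close> entries of \<open>\<pi>\<close> creates an occurrence of \<open>123\<close> unless these entries decrease,
  one of \<open>k\<dots>21(k+1)\<close> unless \<open>j < k\<close>, and, for \<open>j = k - 1\<close>, one of \<open>(k-1)\<dots>21(k+1)k\<close>
  unless \<open>\<pi>\<close> starts with \<open>n\<close>. In particular \<open>n + 1\<close> stands in one of the first \<open>k\<close>
  positions. If \<open>m\<close> is the length of the initial decreasing run of \<open>\<pi>\<close>, the number of
  admissible positions is thus \<open>m + 1\<close> for \<open>m \<le> k - 2\<close>, and otherwise \<open>k\<close> or \<open>k - 1\<close>
  according as \<open>\<pi>\<close> starts with \<open>n\<close> or not. Labelling each permutation by this number, the
  children of a permutation labelled \<open>h\<close> carry exactly the labels that the succession rule
  produces from \<open>(h)\<close>, so on every level the multiset of labels is that of the generating tree.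
\<close>

section \<open>Counting the nodes of a generating tree\<close>

lemma mset_set_UN_disjoint:
  assumes "finite A" "\<And>x. x \<in> A \<Longrightarrow> finite (B x)"
    and "\<And>x y. x \<in> A \<Longrightarrow> y \<in> A \<Longrightarrow> x \<noteq> y \<Longrightarrow> B x \<inter> B y = {}"
  shows "mset_set (\<Union>x\<in>A. B x) = (\<Sum>x\<in>A. mset_set (B x))"
  using assms
proof (induction A rule: finite_induct)
  case empty
  then show ?case by simp
next
  case (insert a A)
  have "mset_set (B a \<union> (\<Union>x\<in>A. B x)) = mset_set (B a) + mset_set (\<Union>x\<in>A. B x)"
    by (rule mset_set_Union) (use insert in auto)
  then show ?case using insert by simp
qed

lemma generating_tree_label_mset:
  fixes nodes :: "nat \<Rightarrow> 'a set" and offspring :: "'a \<Rightarrow> 'a set" and lab :: "'a \<Rightarrow> 'b"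
    and productions :: "'b \<Rightarrow> 'b list" and lvl :: "nat \<Rightarrow> 'b list"
  assumes finite_root: "finite (nodes 0)"
    and root: "image_mset lab (mset_set (nodes 0)) = mset (lvl 0)"
    and grow: "\<And>n. nodes (Suc n) = (\<Union>x\<in>nodes n. offspring x)"
    and finite_offspring: "\<And>n x. x \<in> nodes n \<Longrightarrow> finite (offspring x)"
    and disjoint: "\<And>n x y. x \<in> nodes n \<Longrightarrow> y \<in> nodes n \<Longrightarrow> x \<noteq> y \<Longrightarrow>
                     offspring x \<inter> offspring y = {}"
    and offspring_labels: "\<And>n x. x \<in> nodes n \<Longrightarrow>
                     image_mset lab (mset_set (offspring x)) = mset (productions (lab x))"
    and lvl_Suc: "\<And>n. lvl (Suc n) = concat (map productions (lvl n))"
  shows "image_mset lab (mset_set (nodes n)) = mset (lvl n)"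
proof -
  have finite_nodes: "finite (nodes n)" for n
    by (induction n) (simp_all add: finite_root grow finite_offspring)
  show ?thesis
  proof (induction n)
    case 0
    show ?case by (rule root)
  next
    case (Suc n)
    have "image_mset lab (mset_set (nodes (Suc n)))
        = image_mset lab (\<Sum>x\<in>nodes n. mset_set (offspring x))"
      unfolding grow using finite_nodes finite_offspring disjoint
      by (subst mset_set_UN_disjoint) auto
    also have "\<dots> = (\<Sum>x\<in>nodes n. image_mset lab (mset_set (offspring x)))"
      by (rule sum_comp_morphism[symmetric, unfolded comp_def]) simp_all
    also have "\<dots> = (\<Sum>x\<in>nodes n. mset (productions (lab x)))"
      using offspring_labels by (intro sum.cong) auto
    also have "\<dots> = sum_mset (image_mset (mset \<circ> productions) (image_mset lab (mset_set (nodes n))))"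
      by (simp add: sum_unfold_sum_mset multiset.map_comp comp_def)
    also have "\<dots> = mset (lvl (Suc n))"
      by (simp add: Suc.IH lvl_Suc mset_concat flip: sum_mset_sum_list)
    finally show ?case .
  qed
qed

section \<open>Order isomorphism and pattern containment\<close>

lemma set_mono_subseq: "subseq xs ys \<Longrightarrow> set xs \<subseteq> set ys"
  by (induction rule: list_emb.induct) auto

lemma sorted_wrt_subseq: "subseq xs ys \<Longrightarrow> sorted_wrt R ys \<Longrightarrow> sorted_wrt R xs"
  by (induction rule: list_emb.induct) (auto dest: list_emb_set)

lemma subseq_nth_pair:
  assumes "i < i'" "i' < length xs"
  shows "subseq [xs!i, xs!i'] xs"
proof -
  have "take i' xs ! i \<in> set (take i' xs)"
    using assms by (intro nth_mem) simp
  then have "subseq [xs!i] (take i' xs)"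
    using assms by (simp add: subseq_singleton_left)
  moreover have "subseq [xs!i'] (drop i' xs)"
    using assms by (metis Cons_nth_drop_Suc list.set_intros(1) subseq_singleton_left)
  ultimately have "subseq ([xs!i] @ [xs!i']) (take i' xs @ drop i' xs)"
    by (rule list_emb_append_mono)
  then show ?thesis by simp
qed

lemma sorted_wrt_less_nth_iff:
  fixes xs :: "'a::linorder list"
  assumes "sorted_wrt (<) xs" "i < length xs" "j < length xs"
  shows "xs!i < xs!j \<longleftrightarrow> i < j"
  using assms sorted_wrt_nth_less[of "(<)" xs] by (metis less_asym' linorder_neqE_nat)

lemma sorted_wrt_greater_nth_iff:
  fixes xs :: "'a::linorder list"
  assumes "sorted_wrt (>) xs" "i < length xs" "j < length xs"
  shows "xs!i < xs!j \<longleftrightarrow> j < i"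
  using assms sorted_wrt_nth_less[of "(>)" xs] by (metis less_asym' linorder_neqE_nat)

lemma order_iso_nth:
  "order_iso xs ys \<Longrightarrow> i < length ys \<Longrightarrow> j < length ys \<Longrightarrow> (xs!i < xs!j) = (ys!i < ys!j)"
  unfolding order_iso_def by simp

lemma order_iso_sorted_less:
  "sorted_wrt (<) xs \<Longrightarrow> sorted_wrt (<) ys \<Longrightarrow> length xs = length ys \<Longrightarrow> order_iso xs ys"
  by (simp add: order_iso_def sorted_wrt_less_nth_iff)

lemma order_iso_sorted_greater:
  "sorted_wrt (>) xs \<Longrightarrow> sorted_wrt (>) ys \<Longrightarrow> length xs = length ys \<Longrightarrow> order_iso xs ys"
  by (simp add: order_iso_def sorted_wrt_greater_nth_iff)

lemma order_iso_append:
  assumes "order_iso xs us" "order_iso ys vs"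
    and "\<forall>x\<in>set xs. \<forall>y\<in>set ys. x < y" "\<forall>u\<in>set us. \<forall>v\<in>set vs. u < v"
  shows "order_iso (xs @ ys) (us @ vs)"
proof -
  have len: "length xs = length us" "length ys = length vs"
    using assms(1,2) unfolding order_iso_def by auto
  have "((xs @ ys) ! i < (xs @ ys) ! j) = ((us @ vs) ! i < (us @ vs) ! j)"
    if i: "i < length (xs @ ys)" and j: "j < length (xs @ ys)" for i j
  proof (cases "i < length xs"; cases "j < length xs")
    assume "i < length xs" "j < length xs"
    then show ?thesis using assms(1) len by (simp add: nth_append order_iso_nth)
  next
    assume "i < length xs" "\<not> j < length xs"
    then show ?thesis using assms(3,4) len i j by (simp add: nth_append)
  next
    assume ij: "\<not> i < length xs" "j < length xs"
    have "xs ! j < ys ! (i - length xs)" "us ! j < vs ! (i - length us)"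
      using assms(3,4) ij i len by (simp_all add: nth_mem)
    then show ?thesis using ij len by (simp add: nth_append)
  next
    assume "\<not> i < length xs" "\<not> j < length xs"
    then show ?thesis using assms(2) len i j by (simp add: nth_append order_iso_nth)
  qed
  then show ?thesis using len unfolding order_iso_def by simp
qed

lemma contains_subseq_mono: "subseq p q \<Longrightarrow> contains p \<sigma> \<Longrightarrow> contains q \<sigma>"
  unfolding contains_def using subseq_order.trans by blast

lemma subseq_insert_split:
  assumes "subseq \<tau> (xs @ N # ys)"
  shows "subseq \<tau> (xs @ ys) \<or> (\<exists>t1 t2. \<tau> = t1 @ N # t2 \<and> subseq t1 xs \<and> subseq t2 ys)"
proof -
  obtain a b where ab: "\<tau> = a @ b" "subseq a xs" "subseq b (N # ys)"
    using assms by (auto elim: subseq_appendE)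
  show ?thesis
  proof (cases b)
    case Nil
    then show ?thesis using ab by (simp add: subseq_rev_drop_many)
  next
    case (Cons c b')
    then show ?thesis
      using ab by (cases "c = N") (auto simp: list_emb_append_mono)
  qed
qed

lemma contains_insert_greatest:
  assumes contains: "contains (xs @ N # ys) \<sigma>" and avoids: "\<not> contains (xs @ ys) \<sigma>"
    and below: "\<forall>x\<in>set xs \<union> set ys. x < N"
    and top: "i < length \<sigma>" "\<And>a. a < length \<sigma> \<Longrightarrow> a \<noteq> i \<Longrightarrow> \<sigma>!a < \<sigma>!i"
  obtains t1 t2 where "subseq t1 xs" "subseq t2 ys" "order_iso (t1 @ N # t2) \<sigma>" "length t1 = i"
proof -
  obtain \<tau> where \<tau>: "subseq \<tau> (xs @ N # ys)" "order_iso \<tau> \<sigma>"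
    using contains unfolding contains_def by blast
  moreover have "\<not> subseq \<tau> (xs @ ys)"
    using avoids \<tau>(2) unfolding contains_def by blast
  ultimately obtain t1 t2 where t: "\<tau> = t1 @ N # t2" "subseq t1 xs" "subseq t2 ys"
    using subseq_insert_split[of \<tau> xs N ys] by auto
  have len: "length \<tau> = length \<sigma>"
    using \<tau>(2) by (simp add: order_iso_def)
  have "length t1 = i"
  proof (rule ccontr)
    assume ne: "length t1 \<noteq> i"
    have "\<tau>!i \<in> set t1 \<union> set t2"
    proof (cases "i < length t1")
      case True
      then show ?thesis by (simp add: t(1) nth_append)
    next
      case False
      then have "\<tau>!i = t2 ! (i - length t1 - 1)" "i - length t1 - 1 < length t2"
        using ne top(1) len by (simp_all add: t(1) nth_append nth_Cons')
      then show ?thesis by simp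
    qed
    then have "\<tau>!i < \<tau>!(length t1)"
      using below set_mono_subseq[OF t(2)] set_mono_subseq[OF t(3)] by (auto simp: t(1) nth_append)
    then have "\<sigma>!i < \<sigma>!(length t1)"
      using order_iso_nth[OF \<tau>(2), of i "length t1"] top(1) len by (simp add: t(1) nth_append)
    moreover have "\<sigma>!(length t1) < \<sigma>!i"
      using top(2) ne len by (simp add: t(1))
    ultimately show False by simp
  qed
  then show ?thesis using that t \<tau>(2) by blast
qed

lemma sorted_greater_if_avoids_123:
  fixes xs :: "nat list"
  assumes "distinct xs" "\<forall>x\<in>set xs. x < N" "\<not> contains (xs @ N # ys) [1,2,3]"
  shows "sorted_wrt (>) xs"
proof (rule ccontr)
  assume "\<not> sorted_wrt (>) xs"
  then obtain i i' where ii: "i < i'" "i' < length xs" "\<not> xs!i > xs!i'"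
    unfolding sorted_wrt_iff_nth_less by auto
  have "xs!i \<noteq> xs!i'"
    using ii assms(1) by (simp add: nth_eq_iff_index_eq)
  then have "order_iso [xs!i, xs!i', N] [1,2,3]"
    using ii assms(2) by (intro order_iso_sorted_less) auto
  moreover have "subseq ([xs!i, xs!i'] @ [N]) (xs @ N # ys)"
    using subseq_nth_pair[OF ii(1,2)] by (intro list_emb_append_mono) simp_all
  ultimately show False
    using assms(3) unfolding contains_def by auto
qed

lemma contains_greater_run_then_top:
  fixes xs :: "nat list"
  assumes "sorted_wrt (>) xs" "k \<le> length xs" "\<forall>x\<in>set xs. x < N"
  shows "contains (xs @ N # ys) (rev [1..<k+1] @ [k+1])"
proof -
  have take_sub: "subseq (take k xs) xs"
    by (simp add: prefix_imp_subseq take_is_prefix)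
  then have "subseq (take k xs @ [N]) (xs @ N # ys)"
    by (intro list_emb_append_mono) simp_all
  moreover have "order_iso (take k xs @ [N]) (rev [1..<k+1] @ [k+1])"
  proof (rule order_iso_append)
    show "order_iso (take k xs) (rev [1..<k+1])"
      using assms(1,2) sorted_wrt_subseq[OF take_sub]
      by (intro order_iso_sorted_greater) (simp_all add: sorted_wrt_rev del: upt_Suc)
  qed (use assms(3) in \<open>auto simp: order_iso_def dest: in_set_takeD\<close>)
  ultimately show ?thesis unfolding contains_def by blast
qed

lemma contains_greater_run_then_pair:
  fixes xs :: "nat list"
  assumes "sorted_wrt (>) xs" "length xs = k - 1" "\<forall>x\<in>set xs. x < m" "m < N" "m \<in> set ys"
  shows "contains (xs @ N # ys) (rev [1..<k] @ [k+1, k])"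
proof -
  have "subseq (xs @ [N, m]) (xs @ N # ys)"
    using assms(5) by (simp add: subseq_append' subseq_singleton_left)
  moreover have "order_iso (xs @ [N, m]) (rev [1..<k] @ [k+1, k])"
  proof (rule order_iso_append)
    show "order_iso xs (rev [1..<k])"
      using assms(1,2) by (intro order_iso_sorted_greater) (simp_all add: sorted_wrt_rev)
    show "order_iso [N, m] [k+1, k]"
      using assms(4) by (intro order_iso_sorted_greater) simp_all
  qed (use assms(3,4) in auto)
  ultimately show ?thesis unfolding contains_def by blast
qed

lemma avoids_123_insert_greatest:
  fixes xs :: "nat list"
  assumes "sorted_wrt (>) xs" "\<forall>x\<in>set xs \<union> set ys. x < N" "\<not> contains (xs @ ys) [1,2,3]"
  shows "\<not> contains (xs @ N # ys) [1,2,3]"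
proof
  assume "contains (xs @ N # ys) [1,2,3]"
  then obtain t1 t2 where t: "subseq t1 xs" "order_iso (t1 @ N # t2) [1,2,3]" "length t1 = 2"
    by (rule contains_insert_greatest[where i = 2]) (use assms in \<open>auto simp: nth_Cons'\<close>)
  have "sorted_wrt (>) t1"
    using sorted_wrt_subseq t(1) assms(1) by blast
  then have "t1!1 < t1!0"
    using t(3) sorted_wrt_nth_less[of "(>)" t1 0 1] by simp
  moreover have "t1!0 < t1!1"
    using order_iso_nth[OF t(2), of 0 1] t(3) by (simp add: nth_append)
  ultimately show False by simp
qed

lemma avoids_run_top_insert_greatest:
  fixes xs :: "nat list"
  assumes "length xs < k" "\<forall>x\<in>set xs \<union> set ys. x < N"
    and "\<not> contains (xs @ ys) (rev [1..<k+1] @ [k+1])"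
  shows "\<not> contains (xs @ N # ys) (rev [1..<k+1] @ [k+1])"
proof
  assume "contains (xs @ N # ys) (rev [1..<k+1] @ [k+1])"
  then obtain t1 where "subseq t1 xs" "length t1 = k"
    by (rule contains_insert_greatest[where i = k])
      (use assms in \<open>auto simp: nth_append rev_nth simp del: upt_Suc\<close>)
  then show False
    using assms(1) list_emb_length by fastforce
qed

lemma avoids_run_pair_insert_greatest:
  fixes xs :: "nat list"
  assumes "2 \<le> k" "length xs \<le> k - 1" "length xs = k - 1 \<Longrightarrow> \<forall>y\<in>set ys. y \<le> xs!0"
    and "\<forall>x\<in>set xs \<union> set ys. x < N" "\<not> contains (xs @ ys) (rev [1..<k] @ [k+1, k])"
  shows "\<not> contains (xs @ N # ys) (rev [1..<k] @ [k+1, k])"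
proof
  assume "contains (xs @ N # ys) (rev [1..<k] @ [k+1, k])"
  then obtain t1 t2 where t: "subseq t1 xs" "subseq t2 ys"
      "order_iso (t1 @ N # t2) (rev [1..<k] @ [k+1, k])" "length t1 = k - 1"
    by (rule contains_insert_greatest[where i = "k - 1"])
      (use assms in \<open>auto simp: nth_append rev_nth nth_Cons' simp del: upt_Suc\<close>)
  have "t1 = xs"
    using t(1,4) assms(2) list_emb_length[OF t(1)] by (simp add: subseq_same_length)
  then have ys_below: "\<forall>y\<in>set ys. y \<le> t1!0"
    using assms(3) t(4) by simp
  have "length t2 = 1"
    using t(3,4) assms(1) by (simp add: order_iso_def)
  have "k - length t1 = Suc 0" "0 < length t1" "length t1 < k"
    using t(4) assms(1) by simp_all
  then have "(t1 @ N # t2)!0 = t1!0" "(t1 @ N # t2)!k = t2!0"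
    by (simp_all add: nth_append)
  moreover have "(rev [1..<k] @ [k+1, k])!0 = k - 1" "(rev [1..<k] @ [k+1, k])!k = k"
    using assms(1) by (auto simp: nth_append rev_nth simp del: upt_Suc)
  ultimately have "t1!0 < t2!0"
    using order_iso_nth[OF t(3), of 0 k] assms(1) by simp
  moreover have "t2!0 \<in> set ys"
    using set_mono_subseq[OF t(2)] \<open>length t2 = 1\<close> by (simp add: subset_iff)
  ultimately show False
    using ys_below by force
qed

section \<open>Inserting a new maximum into a permutation\<close>

lemma Sn_iff: "p \<in> Sn n \<longleftrightarrow> set p = {1..n} \<and> distinct p"
  by (simp add: Sn_def permutations_of_set_def)

lemma length_Sn: "p \<in> Sn n \<Longrightarrow> length p = n"
  by (metis Sn_iff card_atLeastAtMost diff_Suc_1 distinct_card)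

definition insert_max :: "nat list \<Rightarrow> nat \<Rightarrow> nat list" where
  "insert_max p j = take j p @ Suc (length p) # drop j p"

lemma insert_max_Sn:
  assumes "\<pi> \<in> Sn n" "j \<le> n"
  shows "insert_max \<pi> j \<in> Sn (Suc n)"
proof -
  have len: "length \<pi> = n" and set_\<pi>: "set \<pi> = {1..n}" and "distinct \<pi>"
    using assms(1) by (auto simp: length_Sn Sn_iff)
  have eq: "insert_max \<pi> j = take j \<pi> @ Suc n # drop j \<pi>"
    by (simp add: insert_max_def len)
  have "set (insert_max \<pi> j) = insert (Suc n) (set \<pi>)"
    unfolding eq using set_append[of "take j \<pi>" "drop j \<pi>"] by auto
  moreover have "distinct (insert_max \<pi> j)"
    unfolding eq using \<open>distinct \<pi>\<close> set_\<pi> distinct_append[of "take j \<pi>" "drop j \<pi>"]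
    by (auto dest: in_set_takeD in_set_dropD)
  ultimately show ?thesis
    using set_\<pi> \<open>distinct \<pi>\<close> by (auto simp: Sn_iff)
qed

lemma Sn_Suc_insert_maxE:
  assumes "\<sigma> \<in> Sn (Suc n)" "q \<le> n" "\<sigma>!q = Suc n"
  obtains \<pi> where "\<pi> \<in> Sn n" "subseq \<pi> \<sigma>" "\<sigma> = insert_max \<pi> q"
proof -
  define us vs where "us = take q \<sigma>" and "vs = drop (Suc q) \<sigma>"
  have \<sigma>_eq: "\<sigma> = us @ Suc n # vs" and len_us: "length us = q"
    using id_take_nth_drop[of q \<sigma>] assms length_Sn[OF assms(1)] by (simp_all add: us_def vs_def)
  have "distinct (us @ Suc n # vs)" and set_\<sigma>: "set (us @ Suc n # vs) = {1..Suc n}"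
    using assms(1) by (simp_all add: \<sigma>_eq Sn_iff)
  then have "distinct (us @ vs)" "set (us @ vs) = {1..Suc n} - {Suc n}"
    by auto
  then have \<pi>: "us @ vs \<in> Sn n"
    by (simp add: Sn_iff atLeastAtMostSuc_conv)
  moreover have "subseq (us @ vs) \<sigma>"
    by (simp add: \<sigma>_eq subseq_append' list_emb_Cons)
  moreover have "\<sigma> = insert_max (us @ vs) q"
    using length_Sn[OF \<pi>] by (simp add: \<sigma>_eq insert_max_def len_us)
  ultimately show ?thesis by (rule that)
qed

lemma insert_max_inj:
  assumes "\<pi> \<in> Sn n" "\<pi>' \<in> Sn n" "j \<le> n" "j' \<le> n" "insert_max \<pi> j = insert_max \<pi>' j'"
  shows "\<pi> = \<pi>'" "j = j'"
proof -
  have restore: "filter (\<lambda>x. x \<noteq> Suc n) (insert_max \<rho> i) = \<rho>"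
      "length (takeWhile (\<lambda>x. x \<noteq> Suc n) (insert_max \<rho> i)) = i"
    if "\<rho> \<in> Sn n" "i \<le> n" for \<rho> i
  proof -
    have len: "length \<rho> = n" and "\<forall>x\<in>set \<rho>. x \<noteq> Suc n"
      using that(1) by (auto simp: length_Sn Sn_iff)
    then have take: "\<forall>x\<in>set (take i \<rho>). x \<noteq> Suc n" and "\<forall>x\<in>set (drop i \<rho>). x \<noteq> Suc n"
      by (auto dest: in_set_takeD in_set_dropD)
    then have "filter (\<lambda>x. x \<noteq> Suc n) (take i \<rho>) = take i \<rho>"
      "filter (\<lambda>x. x \<noteq> Suc n) (drop i \<rho>) = drop i \<rho>"
      using take by (simp_all only: filter_id_conv)
    then show "filter (\<lambda>x. x \<noteq> Suc n) (insert_max \<rho> i) = \<rho>"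
      by (simp add: insert_max_def len)
    have "takeWhile (\<lambda>x. x \<noteq> Suc n) (insert_max \<rho> i) = take i \<rho>"
      using take by (simp add: insert_max_def len)
    then show "length (takeWhile (\<lambda>x. x \<noteq> Suc n) (insert_max \<rho> i)) = i"
      using that(2) len by simp
  qed
  show "\<pi> = \<pi>'"
    using restore(1)[OF assms(1,3)] restore(1)[OF assms(2,4)] assms(5) by metis
  show "j = j'"
    using restore(2)[OF assms(1,3)] restore(2)[OF assms(2,4)] assms(5) by metis
qed

section \<open>The initial decreasing run\<close>

fun desc_run_len :: "'a::linorder list \<Rightarrow> nat" where
  "desc_run_len [] = 0"
| "desc_run_len [x] = 1"
| "desc_run_len (x # y # xs) = (if y < x then Suc (desc_run_len (y # xs)) else 1)"

lemma desc_run_len_le_length: "desc_run_len xs \<le> length xs"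
  by (induction xs rule: desc_run_len.induct) auto

lemma sorted_take_iff_le_desc_run_len:
  "j \<le> length xs \<Longrightarrow> sorted_wrt (>) (take j xs) \<longleftrightarrow> j \<le> desc_run_len xs"
proof (induction xs arbitrary: j rule: desc_run_len.induct)
  case 1
  then show ?case by simp
next
  case (2 x)
  then show ?case by (cases j) auto
next
  case (3 x y xs)
  show ?case
  proof (cases j)
    case 0
    then show ?thesis by simp
  next
    case (Suc j')
    show ?thesis
    proof (cases "y < x")
      case True
      have "sorted_wrt (>) (take j' (y # xs)) \<longleftrightarrow> j' \<le> desc_run_len (y # xs)"
        using 3 Suc True by simp
      moreover have "sorted_wrt (>) (take j' (y # xs)) \<Longrightarrow> \<forall>z\<in>set (take j' (y # xs)). z < x"
        using True by (cases j') auto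
      ultimately show ?thesis
        using Suc True by auto
    next
      case False
      then show ?thesis using Suc by (cases j') auto
    qed
  qed
qed

lemma desc_run_len_eqI:
  assumes "j \<le> length xs" "sorted_wrt (>) (take j xs)"
    and "j < length xs \<Longrightarrow> \<not> sorted_wrt (>) (take (Suc j) xs)"
  shows "desc_run_len xs = j"
proof -
  have "j \<le> desc_run_len xs"
    using sorted_take_iff_le_desc_run_len assms(1,2) by blast
  moreover have "\<not> Suc j \<le> desc_run_len xs"
  proof
    assume le: "Suc j \<le> desc_run_len xs"
    then have "Suc j \<le> length xs"
      using desc_run_len_le_length order_trans by blast
    then show False
      using sorted_take_iff_le_desc_run_len[of "Suc j" xs] le assms(3) by simp
  qed
  ultimately show ?thesis by simp
qed

lemma desc_run_len_Cons_greatest: "\<forall>x\<in>set xs. x < y \<Longrightarrow> desc_run_len (y # xs) = Suc (desc_run_len xs)"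
  by (cases xs) auto

section \<open>Active sites\<close>

lemma Ck_iff:
  "p \<in> Ck k \<longleftrightarrow> (\<exists>n. p \<in> Sn n) \<and> \<not> contains p [1,2,3]
     \<and> \<not> contains p (rev [1..<k] @ [k+1, k]) \<and> \<not> contains p (rev [1..<k+1] @ [k+1])"
  by (auto simp: Ck_def Av_def)

lemma Ck_subseq: "p \<in> Ck k \<Longrightarrow> q \<in> Sn m \<Longrightarrow> subseq q p \<Longrightarrow> q \<in> Ck k"
  using contains_subseq_mono unfolding Ck_iff by blast

lemma Ck_Sn_0: "Ck k \<inter> Sn 0 = {[]}"
proof -
  have "\<not> contains [] \<sigma>" if "\<sigma> \<noteq> []" for \<sigma>
    using that unfolding contains_def order_iso_def by auto
  moreover have "[] \<in> Sn 0"
    by (simp add: Sn_iff)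
  ultimately have "[] \<in> Ck k"
    unfolding Ck_iff by auto
  moreover have "Sn 0 = {[]}"
    by (auto simp: Sn_iff)
  ultimately show ?thesis by blast
qed

lemma Ck_insert_greatest_imp:
  assumes k: "2 \<le> k" and perm: "xs @ ys \<in> Sn n" and ins: "xs @ Suc n # ys \<in> Ck k"
  shows "sorted_wrt (>) xs" "length xs < k" "length xs = k - 1 \<Longrightarrow> xs!0 = n"
proof -
  have set_xs_ys: "set xs \<union> set ys = {1..n}" and "distinct xs"
    using perm by (auto simp: Sn_iff)
  then have below: "\<forall>x\<in>set xs \<union> set ys. x < Suc n"
    by auto
  have ins_avoids: "\<not> contains (xs @ Suc n # ys) [1,2,3]"
      "\<not> contains (xs @ Suc n # ys) (rev [1..<k] @ [k+1, k])"
      "\<not> contains (xs @ Suc n # ys) (rev [1..<k+1] @ [k+1])"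
    using ins unfolding Ck_iff by blast+
  show sorted: "sorted_wrt (>) xs"
    using \<open>distinct xs\<close> below ins_avoids(1) by (intro sorted_greater_if_avoids_123) auto
  show "length xs < k"
    using contains_greater_run_then_top[OF sorted] below ins_avoids(3) by (meson UnI1 not_le)
  show "xs!0 = n" if len: "length xs = k - 1"
  proof (rule ccontr)
    assume "xs!0 \<noteq> n"
    obtain x0 rest where xs: "xs = x0 # rest"
      using len k by (cases xs) auto
    have "x0 \<in> {1..n}"
      using set_xs_ys xs by auto
    then have "x0 < n"
      using \<open>xs!0 \<noteq> n\<close> xs by auto
    then have "\<forall>x\<in>set xs. x < n"
      using sorted by (auto simp: xs)
    moreover have "n \<in> set ys"
      using set_xs_ys \<open>x0 < n\<close> calculation by auto
    ultimately have "contains (xs @ Suc n # ys) (rev [1..<k] @ [k+1, k])"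
      using sorted len by (intro contains_greater_run_then_pair) auto
    then show False
      using ins_avoids(2) by simp
  qed
qed

lemma Ck_insert_greatestI:
  assumes k: "2 \<le> k" and avoids: "xs @ ys \<in> Ck k" and perm: "xs @ ys \<in> Sn n"
    and sorted: "sorted_wrt (>) xs" and short: "length xs < k"
    and first: "length xs = k - 1 \<Longrightarrow> xs!0 = n"
  shows "xs @ Suc n # ys \<in> Ck k"
proof -
  have set_xs_ys: "set xs \<union> set ys = {1..n}"
    using perm by (auto simp: Sn_iff)
  then have below: "\<forall>x\<in>set xs \<union> set ys. x < Suc n"
    by auto
  have avoids_old: "\<not> contains (xs @ ys) [1,2,3]"
      "\<not> contains (xs @ ys) (rev [1..<k] @ [k+1, k])"
      "\<not> contains (xs @ ys) (rev [1..<k+1] @ [k+1])"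
    using avoids unfolding Ck_iff by blast+
  have "xs @ Suc n # ys = insert_max (xs @ ys) (length xs)"
    using length_Sn[OF perm] by (simp add: insert_max_def)
  then have "xs @ Suc n # ys \<in> Sn (Suc n)"
    using insert_max_Sn[OF perm] length_Sn[OF perm] by simp
  moreover have "\<not> contains (xs @ Suc n # ys) [1,2,3]"
    by (rule avoids_123_insert_greatest[OF sorted below avoids_old(1)])
  moreover have "\<not> contains (xs @ Suc n # ys) (rev [1..<k+1] @ [k+1])"
    by (rule avoids_run_top_insert_greatest[OF short below avoids_old(3)])
  moreover have "\<not> contains (xs @ Suc n # ys) (rev [1..<k] @ [k+1, k])"
    using k short first set_xs_ys
    by (intro avoids_run_pair_insert_greatest[OF _ _ _ below avoids_old(2)]) auto
  ultimately show ?thesis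
    unfolding Ck_iff by blast
qed

lemma insert_max_Ck_iff:
  assumes k: "2 \<le> k" and \<pi>: "\<pi> \<in> Ck k" "\<pi> \<in> Sn n" and j: "j \<le> n"
  shows "insert_max \<pi> j \<in> Ck k \<longleftrightarrow> j \<le> desc_run_len \<pi> \<and> j < k \<and> (j = k - 1 \<longrightarrow> \<pi>!0 = n)"
proof -
  let ?xs = "take j \<pi>" and ?ys = "drop j \<pi>"
  have len: "length \<pi> = n"
    using \<pi>(2) by (rule length_Sn)
  have eq: "insert_max \<pi> j = ?xs @ Suc n # ?ys"
    by (simp add: insert_max_def len)
  have split: "?xs @ ?ys \<in> Ck k" "?xs @ ?ys \<in> Sn n" and len_xs: "length ?xs = j"
    using \<pi> j len by simp_all
  have sorted_iff: "sorted_wrt (>) ?xs \<longleftrightarrow> j \<le> desc_run_len \<pi>"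
    using sorted_take_iff_le_desc_run_len[of j \<pi>] j len by simp
  have first: "?xs ! 0 = \<pi>!0" if "j = k - 1"
    using that k by simp
  show ?thesis
  proof
    assume "insert_max \<pi> j \<in> Ck k"
    then have "?xs @ Suc n # ?ys \<in> Ck k"
      by (simp only: eq)
    from Ck_insert_greatest_imp[OF k split(2) this]
    show "j \<le> desc_run_len \<pi> \<and> j < k \<and> (j = k - 1 \<longrightarrow> \<pi>!0 = n)"
      using len_xs sorted_iff first by auto
  next
    assume H: "j \<le> desc_run_len \<pi> \<and> j < k \<and> (j = k - 1 \<longrightarrow> \<pi>!0 = n)"
    show "insert_max \<pi> j \<in> Ck k"
      unfolding eq by (rule Ck_insert_greatestI[OF k split]) (use H len_xs sorted_iff first in auto)
  qed
qed

definition active_sites :: "nat \<Rightarrow> nat list \<Rightarrow> nat set" where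
  "active_sites k \<pi> = {j. j \<le> length \<pi> \<and> insert_max \<pi> j \<in> Ck k}"

lemma active_sites_eq:
  assumes "3 \<le> k" "\<pi> \<in> Ck k" "\<pi> \<in> Sn n"
  shows "active_sites k \<pi> = {0..min (desc_run_len \<pi>) (k - 2)} \<union>
    (if k - 1 \<le> desc_run_len \<pi> \<and> \<pi>!0 = n then {k - 1} else {})"
proof -
  have "desc_run_len \<pi> \<le> n"
    using desc_run_len_le_length length_Sn[OF assms(3)] by metis
  moreover have "2 \<le> k"
    using assms(1) by simp
  ultimately show ?thesis
    using insert_max_Ck_iff[OF \<open>2 \<le> k\<close> assms(2,3)] assms(1) length_Sn[OF assms(3)]
    unfolding active_sites_def by auto
qed

text \<open>By \<open>active_sites_eq\<close>, the label of a permutation is its number of active sites.\<close>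

definition label :: "nat \<Rightarrow> nat list \<Rightarrow> nat" where
  "label k \<pi> = (if desc_run_len \<pi> \<le> k - 2 then desc_run_len \<pi> + 1
                else if \<pi>!0 = length \<pi> then k else k - 1)"

lemma label_insert_max_0:
  assumes "\<pi> \<in> Sn n" "2 \<le> k"
  shows "label k (insert_max \<pi> 0) = min (desc_run_len \<pi> + 2) k"
proof -
  have "insert_max \<pi> 0 = Suc n # \<pi>"
    using length_Sn[OF assms(1)] by (simp add: insert_max_def)
  moreover have "desc_run_len (Suc n # \<pi>) = Suc (desc_run_len \<pi>)"
    using assms(1) by (intro desc_run_len_Cons_greatest) (auto simp: Sn_iff)
  ultimately show ?thesis
    using assms length_Sn[OF assms(1)] by (simp add: label_def)
qed

lemma label_insert_max:
  assumes "\<pi> \<in> Sn n" "0 < j" "j \<le> desc_run_len \<pi>"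
  shows "label k (insert_max \<pi> j) = (if j \<le> k - 2 then j + 1 else k - 1)"
proof -
  have len: "length \<pi> = n"
    using assms(1) by (rule length_Sn)
  have j: "j \<le> n"
    using assms(3) desc_run_len_le_length[of \<pi>] len by simp
  have ins: "insert_max \<pi> j = take j \<pi> @ Suc n # drop j \<pi>"
    by (simp add: insert_max_def len)
  have first: "take j \<pi> ! 0 = \<pi>!0" "\<pi>!0 \<in> set (take j \<pi>)"
    using assms(2) j len by (auto simp: in_set_conv_nth intro: exI[of _ 0])
  then have "\<pi>!0 < Suc n"
    using assms(1) by (auto simp: Sn_iff dest: in_set_takeD)
  have "desc_run_len (insert_max \<pi> j) = j"
  proof (rule desc_run_len_eqI)
    show "j \<le> length (insert_max \<pi> j)" "sorted_wrt (>) (take j (insert_max \<pi> j))"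
      using ins j len sorted_take_iff_le_desc_run_len[of j \<pi>] assms(3) by simp_all
    have "take (Suc j) (insert_max \<pi> j) = take j \<pi> @ [Suc n]"
      using ins j len by simp
    then show "\<not> sorted_wrt (>) (take (Suc j) (insert_max \<pi> j))"
      using first \<open>\<pi>!0 < Suc n\<close> by (auto simp: sorted_wrt_append intro!: bexI[of _ "\<pi>!0"])
  qed
  moreover have "insert_max \<pi> j ! 0 = \<pi>!0" "length (insert_max \<pi> j) = Suc n"
    using ins first(1) j len assms(2) by (simp_all add: nth_append)
  ultimately show ?thesis
    using \<open>\<pi>!0 < Suc n\<close> by (simp add: label_def)
qed

lemma offspring_labels_list:
  assumes k: "3 \<le> k" and \<pi>: "\<pi> \<in> Ck k" "\<pi> \<in> Sn n"
  defines "m \<equiv> desc_run_len \<pi>"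
  defines "a \<equiv> min m (k - 2)" and "c \<equiv> k - 1 \<le> m \<and> \<pi>!0 = n"
  shows "image_mset (label k \<circ> insert_max \<pi>) (mset_set (active_sites k \<pi>))
       = mset (min (m + 2) k # [2..<a + 2] @ (if c then [k - 1] else []))"
proof -
  let ?sites = "0 # [1..<Suc a] @ (if c then [k - 1] else [])"
  have "active_sites k \<pi> = set ?sites"
    using active_sites_eq[OF k \<pi>] by (auto simp: m_def a_def c_def)
  moreover have "distinct ?sites"
    using k by (auto simp: a_def c_def)
  ultimately have sites: "mset_set (active_sites k \<pi>) = mset ?sites"
    by (simp only: mset_set_set)
  have "map (label k \<circ> insert_max \<pi>) [1..<Suc a] = [2..<a + 2]"
  proof -
    have "map (label k \<circ> insert_max \<pi>) [1..<Suc a] = map Suc [1..<Suc a]"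
      using label_insert_max[OF \<pi>(2)] by (intro map_cong) (auto simp: a_def m_def)
    then show ?thesis
      by (simp add: map_Suc_upt numeral_2_eq_2 del: upt_Suc)
  qed
  moreover have "label k (insert_max \<pi> (k - 1)) = k - 1" if c
    using that k label_insert_max[OF \<pi>(2), of "k - 1" k] by (simp add: c_def m_def)
  moreover have "label k (insert_max \<pi> 0) = min (m + 2) k"
    using label_insert_max_0[OF \<pi>(2)] k by (simp add: m_def)
  ultimately have "map (label k \<circ> insert_max \<pi>) ?sites
      = min (m + 2) k # [2..<a + 2] @ (if c then [k - 1] else [])"
    by (simp del: upt_Suc)
  then show ?thesis
    by (simp only: sites flip: mset_map)
qed

lemma children_label:
  assumes "3 \<le> k" "\<pi> \<in> Sn n"
  defines "m \<equiv> desc_run_len \<pi>"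
  shows "children k (label k \<pi>) =
    (if m \<le> k - 2 then [2..<m + 2] @ [m + 2]
     else if \<pi>!0 = n then [2..<k] @ [k - 1, k] else [2..<k] @ [k])"
  using assms length_Sn[OF assms(2)]
  by (auto simp: label_def children_def upt_Suc_append simp del: upt_Suc)

lemma offspring_labels:
  assumes k: "3 \<le> k" and \<pi>: "\<pi> \<in> Ck k" "\<pi> \<in> Sn n"
  shows "image_mset (label k \<circ> insert_max \<pi>) (mset_set (active_sites k \<pi>))
       = mset (children k (label k \<pi>))"
proof -
  define m where "m = desc_run_len \<pi>"
  note offspring = offspring_labels_list[OF k \<pi>, folded m_def]
    and children = children_label[OF k \<pi>(2), folded m_def]
  consider (short) "m \<le> k - 2" | (top_first) "k - 2 < m" "\<pi>!0 = n" | (other) "k - 2 < m" "\<pi>!0 \<noteq> n"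
    by linarith
  then show ?thesis
  proof cases
    case short
    then have "min m (k - 2) = m" "\<not> k - 1 \<le> m" "min (m + 2) k = m + 2"
      using k by auto
    then show ?thesis
      using offspring children short by (simp del: upt_Suc mset_upt)
  next
    case top_first
    then have "min m (k - 2) = k - 2" "k - 1 \<le> m" "min (m + 2) k = k" "k - 2 + 2 = k"
      using k by auto
    then show ?thesis
      using offspring children top_first by (simp del: upt_Suc mset_upt)
  next
    case other
    then have "min m (k - 2) = k - 2" "min (m + 2) k = k" "k - 2 + 2 = k"
      using k by auto
    then show ?thesis
      using offspring children other by (simp del: upt_Suc mset_upt)
  qed
qed

section \<open>The generating tree of \<open>Ck k\<close>\<close>

lemma Ck_Sn_Suc:
  "Ck k \<inter> Sn (Suc n) = (\<Union>\<pi>\<in>Ck k \<inter> Sn n. insert_max \<pi> ` active_sites k \<pi>)"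
proof
  show "Ck k \<inter> Sn (Suc n) \<subseteq> (\<Union>\<pi>\<in>Ck k \<inter> Sn n. insert_max \<pi> ` active_sites k \<pi>)"
  proof
    fix \<sigma> assume \<sigma>: "\<sigma> \<in> Ck k \<inter> Sn (Suc n)"
    then have "Suc n \<in> set \<sigma>"
      by (simp add: Sn_iff)
    then obtain q where q: "q < Suc n" "\<sigma>!q = Suc n"
      using length_Sn[of \<sigma> "Suc n"] \<sigma> by (auto simp: in_set_conv_nth)
    then obtain \<pi> where \<pi>: "\<pi> \<in> Sn n" "subseq \<pi> \<sigma>" "\<sigma> = insert_max \<pi> q"
      using Sn_Suc_insert_maxE[of \<sigma> n q] \<sigma> by auto
    moreover have "\<pi> \<in> Ck k"
      using Ck_subseq \<sigma> \<pi> by blast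
    moreover have "q \<in> active_sites k \<pi>"
      using \<sigma> \<pi> q length_Sn[OF \<pi>(1)] by (auto simp: active_sites_def)
    ultimately show "\<sigma> \<in> (\<Union>\<pi>\<in>Ck k \<inter> Sn n. insert_max \<pi> ` active_sites k \<pi>)"
      by blast
  qed
  show "(\<Union>\<pi>\<in>Ck k \<inter> Sn n. insert_max \<pi> ` active_sites k \<pi>) \<subseteq> Ck k \<inter> Sn (Suc n)"
    using insert_max_Sn length_Sn by (fastforce simp: active_sites_def)
qed

lemma label_mset_Ck_Sn:
  assumes k: "3 \<le> k"
  shows "image_mset (label k) (mset_set (Ck k \<inter> Sn n)) = mset (level k n)"
proof (rule generating_tree_label_mset[where offspring = "\<lambda>\<pi>. insert_max \<pi> ` active_sites k \<pi>"])
  have inj: "inj_on (insert_max \<pi>) (active_sites k \<pi>)" if "\<pi> \<in> Sn n" for \<pi> n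
    using insert_max_inj(2)[OF that that] length_Sn[OF that]
    by (auto simp: active_sites_def intro: inj_onI)
  show "image_mset (label k) (mset_set (insert_max \<pi> ` active_sites k \<pi>))
      = mset (children k (label k \<pi>))" if \<pi>: "\<pi> \<in> Ck k \<inter> Sn n" for \<pi> n
  proof -
    have "\<pi> \<in> Ck k" "\<pi> \<in> Sn n"
      using \<pi> by simp_all
    moreover have "mset_set (insert_max \<pi> ` active_sites k \<pi>)
        = image_mset (insert_max \<pi>) (mset_set (active_sites k \<pi>))"
      using image_mset_mset_set[OF inj[OF \<open>\<pi> \<in> Sn n\<close>]] by simp
    ultimately show ?thesis
      using offspring_labels[OF k] by (simp add: multiset.map_comp)
  qed
  show "finite (insert_max \<pi> ` active_sites k \<pi>)" for \<pi>
    by (simp add: active_sites_def)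
  show "insert_max \<pi> ` active_sites k \<pi> \<inter> insert_max \<pi>' ` active_sites k \<pi>' = {}"
    if "\<pi> \<in> Ck k \<inter> Sn n" "\<pi>' \<in> Ck k \<inter> Sn n" "\<pi> \<noteq> \<pi>'" for \<pi> \<pi>' n
    using that insert_max_inj(1)[of \<pi> n \<pi>'] length_Sn by (fastforce simp: active_sites_def)
qed (simp_all add: Ck_Sn_0 Ck_Sn_Suc label_def)

lemma max_position_lt:
  assumes "2 \<le> k" "\<sigma> \<in> Ck k" "\<sigma> \<in> Sn (Suc n)" "q \<le> n" "\<sigma>!q = Suc n"
  shows "q < k"
proof -
  obtain \<pi> where \<pi>: "\<pi> \<in> Sn n" "subseq \<pi> \<sigma>" "\<sigma> = insert_max \<pi> q"
    using Sn_Suc_insert_maxE assms(3-5) by blast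
  then have "\<pi> \<in> Ck k"
    using Ck_subseq assms(2) by blast
  then show ?thesis
    using insert_max_Ck_iff[OF _ _ \<pi>(1) assms(4)] \<pi>(3) assms(1,2) by auto
qed

theorem mainTheorem7:
  fixes k :: nat
  assumes "k \<ge> 3"
  shows "(\<forall>n\<ge>1. \<forall>p\<in>Ck k \<inter> Sn n. \<forall>l. 1 \<le> l \<and> l \<le> n \<and> p ! (l - 1) = n \<longrightarrow> l \<le> k)
       \<and> (\<forall>n. card (Ck k \<inter> Sn n) = length (level k n))"
proof (intro conjI allI impI ballI)
  fix n p l
  assume "n \<ge> 1" "p \<in> Ck k \<inter> Sn n" and l: "1 \<le> l \<and> l \<le> n \<and> p ! (l - 1) = n"
  then obtain n' where "n = Suc n'" "p \<in> Ck k" "p \<in> Sn (Suc n')"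
    by (cases n) auto
  moreover have "2 \<le> k"
    using assms by simp
  ultimately have "l - 1 < k"
    using max_position_lt l by auto
  then show "l \<le> k"
    using l by simp
next
  fix n
  have "card (Ck k \<inter> Sn n) = size (image_mset (label k) (mset_set (Ck k \<inter> Sn n)))"
    by simp
  then show "card (Ck k \<inter> Sn n) = length (level k n)"
    by (simp add: label_mset_Ck_Sn[OF assms])
qed

end
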